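(* Let $R>0$ and $\Theta=(\alpha,\rho_r,\rho_d,\rho_s,\rho_0,T)$ with $\alpha>1$, $\rho_r,\rho_d,\rho_s,\rho_0>0$, $T>1$. There exists a unique $x'(R,\Theta)\ge0$ such that $$g(x'(R,\Theta))=\Big(1+\frac{\rho_d}{\rho_r}\Big)\sqrt{\frac{R\rho_r}{\alpha}}.$$ Moreover, if $K_{max}(\Theta):=\min\big(\frac T4,\frac{\rho_r}{3\rho_0},\frac{3\rho_d}{2\rho_0}\big)>10$, then the maximizer of $\zeta_{csi}(M,K,R,\Theta)$ over real $(M,K)$ with $1\le K\le K_{max}(\Theta)$ and $M>K$ is $$K'_{csi}(R,\Theta)=\max\Big(\min\Big(\frac{R}{x'(R,\Theta)},K_{max}(\Theta)\Big),1\Big),\qquad M'_{csi}(R,\Theta)=K'_{csi}+\sqrt{K'_{csi}}\sqrt{\frac{\alpha\,(2^{R/K'_{csi}}-1)}{\rho_r}}.$$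
   Context: $g(x)=\sqrt{\frac{x}{2^x-1}}\big(2^x x\ln2-2^x+1\big)$ for $x>0$, with $g(0)=0$ (its limit). For real $M>K\ge1$, $$\frac{1}{\zeta_{csi}(M,K,R,\Theta)}=\frac1R\Big[\frac{\alpha K}{M-K}\big(2^{R/K}-1\big)+M\rho_r+K\rho_d+\rho_s\Big].$$ *)

theory Defs
  imports Complex_Main
begin

definition g :: "real \<Rightarrow> real" where
  "g x = (if x = 0 then 0
          else sqrt (x / (2 powr x - 1)) * (2 powr x * x * ln 2 - 2 powr x + 1))"

definition zeta_csi :: "real \<Rightarrow> real \<Rightarrow> real \<Rightarrow> real \<Rightarrow> real \<Rightarrow> real \<Rightarrow> real \<Rightarrow> real" where
  "zeta_csi M K R \<alpha> \<rho>r \<rho>d \<rho>s =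
     1 / ((1 / R) * (\<alpha> * K / (M - K) * (2 powr (R / K) - 1) + M * \<rho>r + K * \<rho>d + \<rho>s))"

definition x_prime :: "real \<Rightarrow> real \<Rightarrow> real \<Rightarrow> real \<Rightarrow> real" where
  "x_prime R \<alpha> \<rho>r \<rho>d = (THE x. x \<ge> 0 \<and> g x = (1 + \<rho>d / \<rho>r) * sqrt (R * \<rho>r / \<alpha>))"

definition K_max :: "real \<Rightarrow> real \<Rightarrow> real \<Rightarrow> real \<Rightarrow> real" where
  "K_max T \<rho>r \<rho>d \<rho>0 = min (T / 4) (min (\<rho>r / (3 * \<rho>0)) (3 * \<rho>d / (2 * \<rho>0)))"

definition K_csi :: "real \<Rightarrow> real \<Rightarrow> real \<Rightarrow> real \<Rightarrow> real \<Rightarrow> real \<Rightarrow> real" where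
  "K_csi R \<alpha> \<rho>r \<rho>d \<rho>0 T =
     max (min (R / x_prime R \<alpha> \<rho>r \<rho>d) (K_max T \<rho>r \<rho>d \<rho>0)) 1"

definition M_csi :: "real \<Rightarrow> real \<Rightarrow> real \<Rightarrow> real \<Rightarrow> real \<Rightarrow> real \<Rightarrow> real" where
  "M_csi R \<alpha> \<rho>r \<rho>d \<rho>0 T =
     (let K = K_csi R \<alpha> \<rho>r \<rho>d \<rho>0 T in
      K + sqrt K * sqrt (\<alpha> * (2 powr (R / K) - 1) / \<rho>r))"

end

theory Submission
  imports Defs
begin

text \<open>
  Substituting \<open>t = x ln 2\<close> turns \<open>g\<close> into \<open>G t / sqrt (ln 2)\<close>, where
  \<open>G t = sqrt (t / (e\<^sup>t - 1)) (t e\<^sup>t - e\<^sup>t + 1)\<close>. The square of \<open>G\<close> has positive derivative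
  and \<open>G\<close> grows from \<open>0\<close> to \<open>\<infinity>\<close>, so \<open>G\<close> takes every positive value exactly once.

  For fixed \<open>K\<close>, AM-GM in \<open>D = M - K\<close> bounds \<open>\<alpha> K (2\<^bsup>R/K\<^esup> - 1) / D + \<rho>\<^sub>r D\<close> below by
  \<open>2 sqrt (\<alpha> \<rho>\<^sub>r) sqrt (K (2\<^bsup>R/K\<^esup> - 1))\<close>, with equality exactly at the \<open>M\<close> of \<open>M'\<^sub>c\<^sub>s\<^sub>i\<close>.
  What remains is a function of \<open>K\<close> with derivative \<open>(\<rho>\<^sub>r + \<rho>\<^sub>d) - sqrt (\<alpha> \<rho>\<^sub>r / c) G (c / K)\<close>,
  \<open>c = R ln 2\<close>. Since \<open>G\<close> is increasing, it decreases up to \<open>K = c / t\<^sub>0 = R / x'\<close> and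
  increases afterwards, so its minimiser over \<open>[1, K\<^sub>m\<^sub>a\<^sub>x]\<close> is \<open>R / x'\<close> clamped to that interval.
\<close>

definition G :: "real \<Rightarrow> real" where
  "G t = sqrt (t / (exp t - 1)) * (t * exp t - exp t + 1)"

lemma exp_defect_pos:
  fixes t :: real
  assumes "t > 0"
  shows "0 < t * exp t - exp t + 1"
proof -
  have "1 - t < exp (-t)" using exp_minus_greater[of t] assms by simp
  hence "(1 - t) * exp t < exp (-t) * exp t" by simp
  also have "\<dots> = 1" by (simp add: exp_minus field_simps)
  finally show ?thesis by (simp add: algebra_simps)
qed

lemma exp_defect_le:
  fixes t :: real
  shows "t * exp t - exp t + 1 \<le> t * (exp t - 1)"
  using exp_ge_add_one_self[of t] by (simp add: algebra_simps)

lemma exp_minus_one_pos: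
  fixes t :: real
  shows "t > 0 \<Longrightarrow> 0 < exp t - 1"
  using exp_gt_one[of t] by simp

lemma G_pos: "t > 0 \<Longrightarrow> G t > 0"
  unfolding G_def using exp_defect_pos exp_minus_one_pos by simp

lemma G_squared:
  assumes "t > 0"
  shows "(G t)\<^sup>2 = t * (t * exp t - exp t + 1)\<^sup>2 / (exp t - 1)"
  using assms exp_minus_one_pos[OF assms]
  by (simp add: G_def power_mult_distrib)

lemma G_squared_deriv_pos:
  fixes t :: real
  assumes t: "t > 0"
  defines "a \<equiv> t * exp t - exp t + 1"
  shows "0 < ((a\<^sup>2 + 2 * t * a * (t * exp t)) * (exp t - 1) - t * a\<^sup>2 * exp t) / (exp t - 1)\<^sup>2"
proof -
  have a0: "a > 0" using exp_defect_pos[OF t] by (simp add: a_def)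
  have e1: "exp t - 1 > 0" using exp_minus_one_pos[OF t] .
  have "a\<^sup>2 \<le> (t * (exp t - 1))\<^sup>2"
    using a0 exp_defect_le[of t] unfolding a_def by (intro power_mono) auto
  also have "\<dots> = t\<^sup>2 * (exp t - 1) * (exp t - 1)" by (simp add: power2_eq_square)
  also have "\<dots> < t\<^sup>2 * (exp t - 1) * (2 * exp t)"
    using t e1 exp_gt_zero[of t] by (intro mult_strict_left_mono) (linarith, simp)
  finally have "0 < 2 * t\<^sup>2 * exp t * (exp t - 1) - a\<^sup>2" by (simp add: algebra_simps)
  moreover have "(a\<^sup>2 + 2 * t * a * (t * exp t)) * (exp t - 1) - t * a\<^sup>2 * exp t
      = a * (2 * t\<^sup>2 * exp t * (exp t - 1) - a\<^sup>2)"
    unfolding a_def by (simp add: power2_eq_square algebra_simps)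
  ultimately show ?thesis using a0 e1 by simp
qed

lemma G_strict_mono:
  fixes s t :: real
  assumes "0 < s" "s < t"
  shows "G s < G t"
proof -
  let ?P = "\<lambda>t. t * (t * exp t - exp t + 1)\<^sup>2 / (exp t - 1)"
  have "?P s < ?P t"
  proof (rule DERIV_pos_imp_increasing[OF assms(2)])
    fix x :: real assume "s \<le> x" "x \<le> t"
    hence x: "x > 0" using assms by simp
    have "(?P has_real_derivative
        (((x * exp x - exp x + 1)\<^sup>2 + 2 * x * (x * exp x - exp x + 1) * (x * exp x)) * (exp x - 1)
          - x * (x * exp x - exp x + 1)\<^sup>2 * exp x) / (exp x - 1)\<^sup>2) (at x)"
      using exp_minus_one_pos[OF x]
      by (auto intro!: derivative_eq_intros simp: power2_eq_square algebra_simps)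
    then show "\<exists>y. DERIV ?P x :> y \<and> y > 0"
      using G_squared_deriv_pos[OF x] by blast
  qed
  hence "(G s)\<^sup>2 < (G t)\<^sup>2" using G_squared assms by simp
  thus ?thesis using G_pos[of t] assms power_less_imp_less_base by fastforce
qed

lemma G_eq_iff:
  assumes "s > 0" "t > 0"
  shows "G s = G t \<longleftrightarrow> s = t"
  using G_strict_mono[of s t] G_strict_mono[of t s] assms by (cases s t rule: linorder_cases) auto

lemma G_le_three_sq:
  fixes t :: real
  assumes "0 < t" "t \<le> 1"
  shows "G t \<le> 3 * t\<^sup>2"
proof -
  have e1: "exp t - 1 > 0" using exp_minus_one_pos assms by simp
  have "t \<le> exp t - 1" using exp_ge_add_one_self[of t] by linarith
  hence "t / (exp t - 1) \<le> 1" using e1 by simp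
  hence s1: "sqrt (t / (exp t - 1)) \<le> 1" by simp
  have "exp t \<le> exp 1" using assms by simp
  hence "exp t \<le> 3" using exp_le by linarith
  hence "t * exp t \<le> t * 3" using assms by (intro mult_left_mono) auto
  hence "exp t - 1 \<le> 3 * t" using exp_defect_pos[OF assms(1)] by linarith
  hence "t * (exp t - 1) \<le> t * (3 * t)" using assms by (intro mult_left_mono) auto
  hence "t * exp t - exp t + 1 \<le> 3 * t\<^sup>2"
    using exp_defect_le[of t] by (simp add: power2_eq_square)
  hence "sqrt (t / (exp t - 1)) * (t * exp t - exp t + 1) \<le> 1 * (3 * t\<^sup>2)"
    using s1 exp_defect_pos[OF assms(1)] by (intro mult_mono) auto
  thus ?thesis unfolding G_def by (simp only: mult_1)
qed

lemma half_le_G: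
  fixes t :: real
  assumes "2 \<le> t"
  shows "t / 2 \<le> G t"
proof -
  have t: "t > 0" using assms by simp
  have "1 * exp t \<le> (t / 2) * exp t" using assms by (intro mult_right_mono) auto
  hence half: "t * exp t / 2 \<le> t * exp t - exp t + 1" by linarith
  have "t\<^sup>2 \<le> t ^ 3" using assms by (simp add: power2_eq_square power3_eq_cube)
  also have "\<dots> \<le> t ^ 3 * exp t" using t by simp
  finally have "t\<^sup>2 / 4 \<le> t ^ 3 * exp t / 4" by simp
  moreover have "t * (t * exp t / 2)\<^sup>2 / exp t = t ^ 3 * exp t / 4"
    by (simp add: power2_eq_square power3_eq_cube)
  ultimately have "(t / 2)\<^sup>2 \<le> t * (t * exp t / 2)\<^sup>2 / exp t"
    by (simp add: power_divide)
  also have "\<dots> \<le> t * (t * exp t - exp t + 1)\<^sup>2 / exp t"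
    using half t by (intro divide_right_mono mult_left_mono power_mono) auto
  also have "\<dots> \<le> t * (t * exp t - exp t + 1)\<^sup>2 / (exp t - 1)"
    using exp_minus_one_pos[OF t] t by (intro divide_left_mono) auto
  also have "\<dots> = (G t)\<^sup>2" using G_squared[OF t] by simp
  finally show ?thesis using G_pos[OF t] by (meson less_le power2_le_imp_le)
qed

lemma continuous_on_G: "0 < a \<Longrightarrow> continuous_on {a..b} G"
  unfolding G_def by (intro continuous_intros) (auto dest!: exp_minus_one_pos)

lemma G_attains_pos:
  fixes Y :: real
  assumes "Y > 0"
  obtains t where "t > 0" "G t = Y"
proof -
  define a where "a = min 1 (Y / 3)"
  define b where "b = max 2 (2 * Y)"
  have a: "0 < a" "a \<le> 1" unfolding a_def using assms by auto
  have "G a \<le> 3 * a\<^sup>2" using G_le_three_sq a by blast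
  also have "\<dots> \<le> 3 * a" using a by (simp add: power2_eq_square)
  also have "\<dots> \<le> Y" unfolding a_def by simp
  finally have "G a \<le> Y" .
  moreover have "Y \<le> G b" using half_le_G[of b] unfolding b_def by simp
  moreover have "a \<le> b" using a unfolding b_def by simp
  ultimately obtain t where "a \<le> t" "G t = Y"
    using IVT'[of G a Y b] continuous_on_G[OF a(1)] by blast
  moreover from this a have "t > 0" by linarith
  ultimately show ?thesis using that by blast
qed

lemma g_eq_G:
  assumes "x > 0"
  shows "g x = G (x * ln 2) / sqrt (ln 2)"
proof -
  have p: "2 powr x = exp (x * ln 2)" unfolding powr_def by simp
  have "sqrt (x * ln 2 / (exp (x * ln 2) - 1)) = sqrt (x / (exp (x * ln 2) - 1)) * sqrt (ln 2)"
    by (simp add: real_sqrt_mult[symmetric])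
  with assms show ?thesis unfolding g_def G_def p by (simp add: field_simps)
qed

lemma g_eq_iff:
  assumes "y > 0" "t > 0" "G t = y * sqrt (ln 2)" "x \<ge> 0"
  shows "g x = y \<longleftrightarrow> x = t / ln 2"
proof
  assume gx: "g x = y"
  hence "x > 0" using assms by (cases "x = 0") (auto simp: g_def)
  hence "G (x * ln 2) = G t" using gx g_eq_G assms(3) by (simp add: field_simps)
  with \<open>x > 0\<close> assms(2) show "x = t / ln 2" by (simp add: G_eq_iff field_simps)
next
  assume "x = t / ln 2"
  with assms show "g x = y" by (simp add: g_eq_G)
qed

lemma clamp_strict_argmin:
  fixes f :: "real \<Rightarrow> real"
  assumes dec: "\<And>u v. lo \<le> u \<Longrightarrow> u < v \<Longrightarrow> v \<le> x0 \<Longrightarrow> f v < f u"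
    and inc: "\<And>u v. x0 \<le> u \<Longrightarrow> u < v \<Longrightarrow> f u < f v"
    and "lo \<le> x" "x \<le> hi" "x \<noteq> max (min x0 hi) lo"
  shows "f (max (min x0 hi) lo) < f x"
proof (cases "x < max (min x0 hi) lo")
  case True
  with assms(3) show ?thesis by (intro dec) auto
next
  case False
  with assms(3-5) show ?thesis by (intro inc) (auto simp: min_def max_def split: if_splits)
qed

text \<open>The cost left after optimising \<open>M\<close>, with \<open>A = sqrt (\<alpha> \<rho>\<^sub>r)\<close>, \<open>B = \<rho>\<^sub>r + \<rho>\<^sub>d\<close>, \<open>c = R ln 2\<close>.\<close>

definition reduced_cost :: "real \<Rightarrow> real \<Rightarrow> real \<Rightarrow> real \<Rightarrow> real" where
  "reduced_cost A B c K = 2 * A * sqrt (K * (exp (c / K) - 1)) + B * K"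

lemma sqrt_expm1_scaled_deriv:
  fixes c K :: real
  assumes c: "c > 0" and K: "K > 0"
  shows "((\<lambda>K. sqrt (K * (exp (c / K) - 1))) has_real_derivative - G (c / K) / (2 * sqrt c)) (at K)"
proof -
  define t where "t = c / K"
  have t: "t > 0" using c K by (simp add: t_def)
  have e1: "exp t - 1 > 0" using exp_minus_one_pos[OF t] .
  have inner: "((\<lambda>K. K * (exp (c / K) - 1)) has_real_derivative (exp t - 1) - t * exp t) (at K)"
    using K by (auto intro!: derivative_eq_intros simp: t_def field_simps power2_eq_square)
  have "0 < K * (exp (c / K) - 1)" using K e1 by (simp add: t_def)
  from DERIV_chain2[OF DERIV_real_sqrt[OF this] inner[unfolded t_def]]
  have deriv: "((\<lambda>K. sqrt (K * (exp (c / K) - 1))) has_real_derivative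
      - (t * exp t - exp t + 1) / (2 * sqrt (K * (exp t - 1)))) (at K)"
    by (simp add: t_def field_simps)
  have "sqrt (t / (exp t - 1)) * sqrt (K * (exp t - 1)) = sqrt c"
    using e1 K by (simp add: real_sqrt_mult[symmetric] t_def)
  hence "G t / (2 * sqrt c) = sqrt (t / (exp t - 1)) * (t * exp t - exp t + 1)
      / (2 * (sqrt (t / (exp t - 1)) * sqrt (K * (exp t - 1))))"
    by (simp add: G_def)
  also have "\<dots> = (t * exp t - exp t + 1) / (2 * sqrt (K * (exp t - 1)))"
    using t e1 by simp
  finally have "- (t * exp t - exp t + 1) / (2 * sqrt (K * (exp t - 1))) = - G t / (2 * sqrt c)"
    by (simp only: minus_divide_left)
  from deriv[unfolded this] show ?thesis unfolding t_def .
qed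

lemma reduced_cost_deriv:
  assumes "c > 0" "K > 0"
  shows "(reduced_cost A B c has_real_derivative B - A * G (c / K) / sqrt c) (at K)"
  unfolding reduced_cost_def [abs_def]
  by (rule derivative_eq_intros sqrt_expm1_scaled_deriv[OF assms] refl | simp)+

lemma continuous_on_reduced_cost:
  assumes "c > 0" "u > 0"
  shows "continuous_on {u..v} (reduced_cost A B c)"
proof (intro continuous_at_imp_continuous_on ballI)
  fix x assume "x \<in> {u..v}"
  with assms show "isCont (reduced_cost A B c) x"
    using reduced_cost_deriv[of c x] DERIV_isCont by force
qed

lemma reduced_cost_strict_antimono:
  assumes c: "c > 0" and A: "A > 0" and t0: "t0 > 0" and balance: "B * sqrt c = A * G t0"
    and "0 < u" "u < v" "v \<le> c / t0"
  shows "reduced_cost A B c v < reduced_cost A B c u"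
proof (rule DERIV_neg_imp_decreasing_open[OF \<open>u < v\<close> _ continuous_on_reduced_cost[OF c \<open>0 < u\<close>]])
  fix x assume x: "u < x" "x < v"
  have "t0 * v \<le> c" using assms by (simp add: field_simps)
  hence "t0 * x < c" using mult_strict_left_mono[OF \<open>x < v\<close> t0] by linarith
  moreover have "x > 0" using x assms by simp
  ultimately have "t0 < c / x" by (simp add: field_simps)
  hence "A * G t0 < A * G (c / x)" using A t0 G_strict_mono by simp
  hence "B - A * G (c / x) / sqrt c < 0" using balance c by (simp add: field_simps)
  thus "\<exists>y. DERIV (reduced_cost A B c) x :> y \<and> y < 0"
    using reduced_cost_deriv[OF c \<open>x > 0\<close>] by blast
qed

lemma reduced_cost_strict_mono:
  assumes c: "c > 0" and A: "A > 0" and t0: "t0 > 0" and balance: "B * sqrt c = A * G t0"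
    and "c / t0 \<le> u" "u < v"
  shows "reduced_cost A B c u < reduced_cost A B c v"
proof -
  have "u > 0" using divide_pos_pos[OF c t0] assms(5) by linarith
  show ?thesis
  proof (rule DERIV_pos_imp_increasing_open[OF \<open>u < v\<close> _ continuous_on_reduced_cost[OF c \<open>u > 0\<close>]])
    fix x assume x: "u < x" "x < v"
    have "c \<le> t0 * u" using assms by (simp add: field_simps)
    hence "c < t0 * x" using mult_strict_left_mono[OF \<open>u < x\<close> t0] by linarith
    moreover have "x > 0" using x \<open>u > 0\<close> by simp
    ultimately have "c / x < t0" by (simp add: field_simps)
    hence "A * G (c / x) < A * G t0" using A c \<open>x > 0\<close> G_strict_mono[of "c / x" t0] by simp
    hence "B - A * G (c / x) / sqrt c > 0" using balance c by (simp add: field_simps)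
    thus "\<exists>y. DERIV (reduced_cost A B c) x :> y \<and> y > 0"
      using reduced_cost_deriv[OF c \<open>x > 0\<close>] by blast
  qed
qed

definition csi_cost :: "real \<Rightarrow> real \<Rightarrow> real \<Rightarrow> real \<Rightarrow> real \<Rightarrow> real \<Rightarrow> real \<Rightarrow> real" where
  "csi_cost \<alpha> \<rho>r \<rho>d \<rho>s c M K =
     \<alpha> * K / (M - K) * (exp (c / K) - 1) + M * \<rho>r + K * \<rho>d + \<rho>s"

lemma zeta_csi_eq_csi_cost:
  "zeta_csi M K R \<alpha> \<rho>r \<rho>d \<rho>s = R / csi_cost \<alpha> \<rho>r \<rho>d \<rho>s (R * ln 2) M K"
  by (simp add: zeta_csi_def csi_cost_def powr_def)

lemma csi_cost_pos:
  assumes "\<alpha> > 0" "\<rho>r > 0" "\<rho>d > 0" "\<rho>s > 0" "c > 0" "K > 0" "M > K"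
  shows "csi_cost \<alpha> \<rho>r \<rho>d \<rho>s c M K > 0"
  using assms exp_minus_one_pos[of "c / K"] unfolding csi_cost_def
  by (intro add_pos_pos mult_pos_pos divide_pos_pos) auto

lemma divide_plus_mult_eq_sqrt:
  fixes a b D :: real
  assumes "a > 0" "b > 0" "D > 0"
  shows "a / D + b * D = 2 * sqrt (a * b) + (sqrt a - sqrt b * D)\<^sup>2 / D"
proof -
  have "(sqrt a - sqrt b * D)\<^sup>2 = a - 2 * sqrt (a * b) * D + b * D\<^sup>2"
    using assms by (simp add: power2_eq_square algebra_simps real_sqrt_mult)
  thus ?thesis using assms by (simp add: field_simps power2_eq_square)
qed

lemma csi_cost_decomposition:
  assumes "\<alpha> > 0" "\<rho>r > 0" "c > 0" "K > 0" "M > K"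
  shows "csi_cost \<alpha> \<rho>r \<rho>d \<rho>s c M K =
    reduced_cost (sqrt (\<alpha> * \<rho>r)) (\<rho>r + \<rho>d) c K + \<rho>s
      + (sqrt (\<alpha> * K * (exp (c / K) - 1)) - sqrt \<rho>r * (M - K))\<^sup>2 / (M - K)"
proof -
  have "0 < \<alpha> * K * (exp (c / K) - 1)" using assms exp_minus_one_pos[of "c / K"] by simp
  from divide_plus_mult_eq_sqrt[OF this \<open>\<rho>r > 0\<close>, of "M - K"] assms
  have "\<alpha> * K * (exp (c / K) - 1) / (M - K) + \<rho>r * (M - K)
      = 2 * (sqrt (\<alpha> * \<rho>r) * sqrt (K * (exp (c / K) - 1)))
        + (sqrt (\<alpha> * K * (exp (c / K) - 1)) - sqrt \<rho>r * (M - K))\<^sup>2 / (M - K)"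
    by (simp add: real_sqrt_mult[symmetric] ac_simps)
  thus ?thesis unfolding csi_cost_def reduced_cost_def by (simp add: algebra_simps)
qed

lemma csi_cost_ge_reduced_cost:
  assumes "\<alpha> > 0" "\<rho>r > 0" "c > 0" "K > 0" "M > K"
  shows "reduced_cost (sqrt (\<alpha> * \<rho>r)) (\<rho>r + \<rho>d) c K + \<rho>s \<le> csi_cost \<alpha> \<rho>r \<rho>d \<rho>s c M K"
  using csi_cost_decomposition[OF assms] assms by simp

lemma csi_cost_eq_reduced_cost_iff:
  assumes "\<alpha> > 0" "\<rho>r > 0" "c > 0" "K > 0" "M > K"
  shows "csi_cost \<alpha> \<rho>r \<rho>d \<rho>s c M K = reduced_cost (sqrt (\<alpha> * \<rho>r)) (\<rho>r + \<rho>d) c K + \<rho>s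
    \<longleftrightarrow> M = K + sqrt K * sqrt (\<alpha> * (exp (c / K) - 1) / \<rho>r)"
proof -
  have "sqrt (\<alpha> * K * (exp (c / K) - 1)) = sqrt \<rho>r * (sqrt K * sqrt (\<alpha> * (exp (c / K) - 1) / \<rho>r))"
    using assms by (simp add: real_sqrt_mult[symmetric] ac_simps)
  with assms show ?thesis unfolding csi_cost_decomposition[OF assms] by auto
qed

lemma csi_cost_argmin:
  fixes \<alpha> \<rho>r \<rho>d \<rho>s c t0 lo hi :: real
  assumes "\<alpha> > 0" "\<rho>r > 0" "c > 0" "t0 > 0" "0 < lo" "lo \<le> hi"
    and balance: "(\<rho>r + \<rho>d) * sqrt c = sqrt (\<alpha> * \<rho>r) * G t0"
  defines "K' \<equiv> max (min (c / t0) hi) lo"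
  defines "M' \<equiv> K' + sqrt K' * sqrt (\<alpha> * (exp (c / K') - 1) / \<rho>r)"
  shows "lo \<le> K'" "K' \<le> hi" "K' < M'"
    and "\<forall>M K. lo \<le> K \<and> K \<le> hi \<and> K < M \<and> (M, K) \<noteq> (M', K') \<longrightarrow>
      csi_cost \<alpha> \<rho>r \<rho>d \<rho>s c M' K' < csi_cost \<alpha> \<rho>r \<rho>d \<rho>s c M K"
proof -
  show "lo \<le> K'" "K' \<le> hi" using \<open>lo \<le> hi\<close> by (auto simp: K'_def)
  hence "K' > 0" using \<open>0 < lo\<close> by linarith
  thus "K' < M'"
    using assms exp_minus_one_pos[of "c / K'"] by (simp add: M'_def)
  let ?h = "\<lambda>K. reduced_cost (sqrt (\<alpha> * \<rho>r)) (\<rho>r + \<rho>d) c K + \<rho>s"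
  have opt: "csi_cost \<alpha> \<rho>r \<rho>d \<rho>s c M' K' = ?h K'"
    using csi_cost_eq_reduced_cost_iff assms \<open>K' > 0\<close> \<open>K' < M'\<close> by (simp add: M'_def)
  show "\<forall>M K. lo \<le> K \<and> K \<le> hi \<and> K < M \<and> (M, K) \<noteq> (M', K') \<longrightarrow>
      csi_cost \<alpha> \<rho>r \<rho>d \<rho>s c M' K' < csi_cost \<alpha> \<rho>r \<rho>d \<rho>s c M K"
  proof (intro allI impI, elim conjE)
    fix M K assume K: "lo \<le> K" "K \<le> hi" "K < M" "(M, K) \<noteq> (M', K')"
    hence "K > 0" using \<open>0 < lo\<close> by linarith
    have ge: "?h K \<le> csi_cost \<alpha> \<rho>r \<rho>d \<rho>s c M K"
      using csi_cost_ge_reduced_cost assms \<open>K > 0\<close> \<open>K < M\<close> by blast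
    show "csi_cost \<alpha> \<rho>r \<rho>d \<rho>s c M' K' < csi_cost \<alpha> \<rho>r \<rho>d \<rho>s c M K"
    proof (cases "K = K'")
      case True
      with K have "M \<noteq> M'" by auto
      with True have "csi_cost \<alpha> \<rho>r \<rho>d \<rho>s c M K \<noteq> ?h K"
        using csi_cost_eq_reduced_cost_iff assms \<open>K > 0\<close> \<open>K < M\<close> by (simp add: M'_def)
      with ge opt True show ?thesis by simp
    next
      case False
      have A: "sqrt (\<alpha> * \<rho>r) > 0" using assms by simp
      have "?h K' < ?h K" unfolding K'_def
        by (rule clamp_strict_argmin[where lo = lo and hi = hi])
          (use False K assms(3,4,5) reduced_cost_strict_antimono[OF _ A _ balance]
               reduced_cost_strict_mono[OF _ A _ balance] in \<open>auto simp: K'_def\<close>)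
      with ge opt show ?thesis by simp
    qed
  qed
qed

lemma csi_balance_condition:
  fixes R \<alpha> \<rho>r \<rho>d :: real
  assumes "R \<ge> 0" "\<alpha> > 0" "\<rho>r > 0"
  shows "(\<rho>r + \<rho>d) * sqrt (R * ln 2)
    = sqrt (\<alpha> * \<rho>r) * ((1 + \<rho>d / \<rho>r) * sqrt (R * \<rho>r / \<alpha>) * sqrt (ln 2))"
proof -
  have "sqrt (\<alpha> * \<rho>r) * sqrt (R * \<rho>r / \<alpha>) * sqrt (ln 2) = sqrt (\<rho>r\<^sup>2 * (R * ln 2))"
    unfolding real_sqrt_mult[symmetric] using assms by (simp add: power2_eq_square field_simps)
  also have "\<dots> = \<rho>r * sqrt (R * ln 2)" using assms by (simp add: real_sqrt_mult)
  finally show ?thesis using assms by (simp add: field_simps)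
qed

lemma zeta_csi_argmax:
  fixes R \<alpha> \<rho>r \<rho>d \<rho>s t0 Km :: real
  assumes "R > 0" "\<alpha> > 0" "\<rho>r > 0" "\<rho>d > 0" "\<rho>s > 0" "t0 > 0" "1 \<le> Km"
    and balance: "(\<rho>r + \<rho>d) * sqrt (R * ln 2) = sqrt (\<alpha> * \<rho>r) * G t0"
  defines "K' \<equiv> max (min (R * ln 2 / t0) Km) 1"
  defines "M' \<equiv> K' + sqrt K' * sqrt (\<alpha> * (2 powr (R / K') - 1) / \<rho>r)"
  shows "1 \<le> K' \<and> K' \<le> Km \<and> K' < M' \<and>
    (\<forall>M K. 1 \<le> K \<and> K \<le> Km \<and> K < M \<and> (M, K) \<noteq> (M', K') \<longrightarrow>
      zeta_csi M K R \<alpha> \<rho>r \<rho>d \<rho>s < zeta_csi M' K' R \<alpha> \<rho>r \<rho>d \<rho>s)"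
proof -
  have c: "R * ln 2 > 0" using \<open>R > 0\<close> by simp
  have "M' = K' + sqrt K' * sqrt (\<alpha> * (exp (R * ln 2 / K') - 1) / \<rho>r)"
    by (simp add: M'_def powr_def)
  note argmin = csi_cost_argmin[OF \<open>\<alpha> > 0\<close> \<open>\<rho>r > 0\<close> c \<open>t0 > 0\<close> zero_less_one \<open>1 \<le> Km\<close> balance,
      folded K'_def, folded this]
  have "zeta_csi M K R \<alpha> \<rho>r \<rho>d \<rho>s < zeta_csi M' K' R \<alpha> \<rho>r \<rho>d \<rho>s"
    if "1 \<le> K" "K \<le> Km" "K < M" "(M, K) \<noteq> (M', K')" for M K
  proof -
    let ?cost = "csi_cost \<alpha> \<rho>r \<rho>d \<rho>s (R * ln 2)"
    have "?cost M' K' < ?cost M K" using argmin(4) that by blast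
    moreover have "0 < ?cost M K" "0 < ?cost M' K'"
      using csi_cost_pos assms c argmin(1,3) that by simp_all
    ultimately show ?thesis
      unfolding zeta_csi_eq_csi_cost using \<open>R > 0\<close> by (simp add: divide_strict_left_mono)
  qed
  with argmin(1-3) show ?thesis by blast
qed

theorem theorem8:
  fixes R \<alpha> \<rho>r \<rho>d \<rho>s \<rho>0 T :: real
  assumes "R > 0" "\<alpha> > 1" "\<rho>r > 0" "\<rho>d > 0" "\<rho>s > 0" "\<rho>0 > 0" "T > 1"
  shows "(\<exists>!x. x \<ge> 0 \<and> g x = (1 + \<rho>d / \<rho>r) * sqrt (R * \<rho>r / \<alpha>))
    \<and> (K_max T \<rho>r \<rho>d \<rho>0 > 10 \<longrightarrow>
        (let K' = K_csi R \<alpha> \<rho>r \<rho>d \<rho>0 T; M' = M_csi R \<alpha> \<rho>r \<rho>d \<rho>0 T in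
          1 \<le> K' \<and> K' \<le> K_max T \<rho>r \<rho>d \<rho>0 \<and> M' > K' \<and>
          (\<forall>M K. 1 \<le> K \<and> K \<le> K_max T \<rho>r \<rho>d \<rho>0 \<and> M > K \<and> (M, K) \<noteq> (M', K') \<longrightarrow>
             zeta_csi M K R \<alpha> \<rho>r \<rho>d \<rho>s < zeta_csi M' K' R \<alpha> \<rho>r \<rho>d \<rho>s)))"
proof -
  define y where "y = (1 + \<rho>d / \<rho>r) * sqrt (R * \<rho>r / \<alpha>)"
  have "y > 0" unfolding y_def using assms by (intro mult_pos_pos add_pos_pos) auto
  then obtain t0 where t0: "t0 > 0" "G t0 = y * sqrt (ln 2)"
    using G_attains_pos[of "y * sqrt (ln 2)"] by auto
  have g_iff: "x \<ge> 0 \<Longrightarrow> g x = y \<longleftrightarrow> x = t0 / ln 2" for x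
    using g_eq_iff[OF \<open>y > 0\<close> t0] by blast
  hence ex1: "\<exists>!x. x \<ge> 0 \<and> g x = y" using t0 by (intro ex1I[of _ "t0 / ln 2"]) auto
  have "x_prime R \<alpha> \<rho>r \<rho>d = t0 / ln 2"
    unfolding x_prime_def y_def[symmetric] using g_iff t0 by (intro the1_equality[OF ex1]) auto
  hence "R / x_prime R \<alpha> \<rho>r \<rho>d = R * ln 2 / t0" by simp
  moreover have "(\<rho>r + \<rho>d) * sqrt (R * ln 2) = sqrt (\<alpha> * \<rho>r) * G t0"
    using csi_balance_condition[of R \<alpha> \<rho>r \<rho>d] assms t0(2) by (simp add: y_def)
  \<comment> \<open>only \<open>K\<^sub>m\<^sub>a\<^sub>x \<ge> 1\<close> is needed, not the bound 10\<close>
  moreover have "K_max T \<rho>r \<rho>d \<rho>0 > 10 \<Longrightarrow> 1 \<le> K_max T \<rho>r \<rho>d \<rho>0" by simp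
  ultimately show ?thesis
    using ex1 zeta_csi_argmax[of R \<alpha> \<rho>r \<rho>d \<rho>s t0 "K_max T \<rho>r \<rho>d \<rho>0"] assms t0(1)
    unfolding y_def K_csi_def M_csi_def Let_def by auto
qed

end
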